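(* Let $p=p(n)$ and $k=k(n)$ satisfy $p\ge 10^6\log n/n$ and $pk\le 10^{-3}$. Then for any $k$-bounded edge colouring $\phi$ of $K_n$, with probability $1-o(1)$ (as $n\to\infty$) every vertex $v$ of $\Gamma=G(n,p)$ satisfies $\deg_{\Gamma(\phi)}(v)\ge\frac23\deg_\Gamma(v)$.
   Context: $G(n,p)$ is the random graph on $[n]$ with each edge present independently with probability $p$; here it is viewed as a random subgraph of $K_n$. An edge colouring $\phi$ of $K_n$ is $k$-bounded if no colour is used on more than $k$ edges. For a subgraph $\Gamma\subseteq K_n$, $\Gamma(\phi)$ denotes the graph obtained from $\Gamma$ by deleting every edge of $\Gamma$ whose colour under $\phi$ appears on more than one edge of $\Gamma$. *)

theory Defs
  imports Complex_Main
begin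

definition Kn_edges :: "nat \<Rightarrow> nat set set" where
  "Kn_edges n = {e. \<exists>u v. u < n \<and> v < n \<and> u \<noteq> v \<and> e = {u, v}}"

definition k_bounded :: "nat \<Rightarrow> nat \<Rightarrow> (nat set \<Rightarrow> 'c) \<Rightarrow> bool" where
  "k_bounded n k \<phi> \<longleftrightarrow> (\<forall>c. card {e \<in> Kn_edges n. \<phi> e = c} \<le> k)"

definition rainbow_part :: "(nat set \<Rightarrow> 'c) \<Rightarrow> nat set set \<Rightarrow> nat set set" where
  "rainbow_part \<phi> \<Gamma> = {e \<in> \<Gamma>. \<forall>e' \<in> \<Gamma>. \<phi> e' = \<phi> e \<longrightarrow> e' = e}"

definition degree :: "nat set set \<Rightarrow> nat \<Rightarrow> nat" where
  "degree \<Gamma> v = card {e \<in> \<Gamma>. v \<in> e}"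

definition Gnp_prob :: "nat \<Rightarrow> real \<Rightarrow> (nat set set \<Rightarrow> bool) \<Rightarrow> real" where
  "Gnp_prob n p P = (\<Sum>\<Gamma> \<in> {\<Gamma>. \<Gamma> \<subseteq> Kn_edges n \<and> P \<Gamma>}.
       p ^ card \<Gamma> * (1 - p) ^ (card (Kn_edges n) - card \<Gamma>))"

end

theory Submission
  imports Defs
begin

text \<open>
  Fix a vertex v with star A, so |A| = n - 1, and put D = p |A| / 4. If v keeps less than two
  thirds of its \<Gamma>-degree, then either |\<Gamma> \<inter> A| \<le> D, or at least D/3 edges of \<Gamma> \<inter> A share
  their colour with another edge of \<Gamma>. The first event is a Chernoff lower tail. The number Z
  of such clashing star edges is a sum over colour classes, which are disjoint and hence
  independent blocks of at most k edges each; as pk \<le> 1/1000, a present star edge rarely has a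
  present partner of its colour, and E e^Z \<le> e^{p|A|/60}. Exponential Markov bounds make both
  tails at most e^{-p(n-1)/16} \<le> n^{-2} when p \<ge> 10^6 log n / n, and a union bound over the n
  vertices finishes the proof.
\<close>

definition subset_weight :: "real \<Rightarrow> 'a set \<Rightarrow> 'a set \<Rightarrow> real" where
  "subset_weight p B S = p ^ card S * (1 - p) ^ (card B - card S)"

definition subset_expect :: "real \<Rightarrow> 'a set \<Rightarrow> ('a set \<Rightarrow> real) \<Rightarrow> real" where
  "subset_expect p B f = (\<Sum>S\<in>Pow B. subset_weight p B S * f S)"

definition subset_prob :: "real \<Rightarrow> 'a set \<Rightarrow> ('a set \<Rightarrow> bool) \<Rightarrow> real" where
  "subset_prob p B P = subset_expect p B (\<lambda>S. if P S then 1 else 0)"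

lemma subset_expect_cong:
  "(\<And>S. S \<subseteq> B \<Longrightarrow> f S = g S) \<Longrightarrow> subset_expect p B f = subset_expect p B g"
  unfolding subset_expect_def by (auto intro: sum.cong)

lemma subset_prob_cong:
  "(\<And>S. S \<subseteq> B \<Longrightarrow> P S = Q S) \<Longrightarrow> subset_prob p B P = subset_prob p B Q"
  unfolding subset_prob_def by (auto intro: subset_expect_cong)

lemma subset_expect_add:
  "subset_expect p B (\<lambda>S. f S + g S) = subset_expect p B f + subset_expect p B g"
  unfolding subset_expect_def by (simp add: distrib_left sum.distrib)

lemma subset_expect_diff:
  "subset_expect p B (\<lambda>S. f S - g S) = subset_expect p B f - subset_expect p B g"
  unfolding subset_expect_def by (simp add: right_diff_distrib sum_subtractf)

lemma subset_expect_cmult: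
  "subset_expect p B (\<lambda>S. c * f S) = c * subset_expect p B f"
  unfolding subset_expect_def by (simp add: sum_distrib_left mult_ac)

lemma subset_expect_sum:
  "subset_expect p B (\<lambda>S. \<Sum>x\<in>X. f x S) = (\<Sum>x\<in>X. subset_expect p B (f x))"
  unfolding subset_expect_def by (simp add: sum_distrib_left sum.swap[of _ X])

lemma subset_expect_mono:
  assumes "0 \<le> p" "p \<le> 1" "\<And>S. S \<subseteq> B \<Longrightarrow> f S \<le> g S"
  shows "subset_expect p B f \<le> subset_expect p B g"
  unfolding subset_expect_def subset_weight_def
  using assms by (auto intro!: sum_mono mult_left_mono)

lemma subset_weight_Un:
  assumes "finite A" "finite B" "A \<inter> B = {}" "S \<subseteq> A" "T \<subseteq> B"
  shows "subset_weight p (A \<union> B) (S \<union> T) = subset_weight p A S * subset_weight p B T"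
proof -
  have "finite S" "finite T" "S \<inter> T = {}"
    using assms finite_subset by blast+
  then have "card (S \<union> T) = card S + card T"
    by (simp add: card_Un_disjoint)
  moreover have "card (A \<union> B) = card A + card B"
    using assms by (simp add: card_Un_disjoint)
  moreover have "card S \<le> card A" "card T \<le> card B"
    using assms by (auto intro: card_mono)
  ultimately have "card (A \<union> B) - card (S \<union> T) = (card A - card S) + (card B - card T)"
    "card (S \<union> T) = card S + card T"
    by simp_all
  then show ?thesis
    unfolding subset_weight_def by (simp add: power_add mult_ac)
qed

lemma subset_expect_Un:
  assumes "finite A" "finite B" "A \<inter> B = {}"
  shows "subset_expect p (A \<union> B) f
    = subset_expect p A (\<lambda>S. subset_expect p B (\<lambda>T. f (S \<union> T)))"
proof -
  have bij: "bij_betw (\<lambda>(S, T). S \<union> T) (Pow A \<times> Pow B) (Pow (A \<union> B))"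
    by (rule bij_betw_byWitness[where f' = "\<lambda>X. (X \<inter> A, X \<inter> B)"]) (use assms(3) in auto)
  have "subset_expect p (A \<union> B) f
      = (\<Sum>(S, T)\<in>Pow A \<times> Pow B. subset_weight p (A \<union> B) (S \<union> T) * f (S \<union> T))"
    unfolding subset_expect_def
    using sum.reindex_bij_betw[OF bij, of "\<lambda>X. subset_weight p (A \<union> B) X * f X"]
    by (simp add: case_prod_unfold)
  also have "\<dots> = (\<Sum>(S, T)\<in>Pow A \<times> Pow B. subset_weight p A S * subset_weight p B T * f (S \<union> T))"
    by (rule sum.cong) (auto simp: subset_weight_Un[OF assms])
  also have "\<dots> = subset_expect p A (\<lambda>S. subset_expect p B (\<lambda>T. f (S \<union> T)))"
    unfolding subset_expect_def sum.cartesian_product[symmetric]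
    by (simp add: sum_distrib_left mult_ac)
  finally show ?thesis .
qed

lemma subset_expect_empty [simp]: "subset_expect p {} f = f {}"
  unfolding subset_expect_def subset_weight_def by simp

lemma subset_expect_insert:
  assumes "finite B" "x \<notin> B"
  shows "subset_expect p (insert x B) f
    = p * subset_expect p B (\<lambda>T. f (insert x T)) + (1 - p) * subset_expect p B f"
proof -
  have "Pow {x} = {{}, {x}}"
    by (auto simp: Pow_insert)
  then have "subset_expect p {x} g = p * g {x} + (1 - p) * g {}" for g
    unfolding subset_expect_def subset_weight_def by simp
  then show ?thesis
    using subset_expect_Un[of "{x}" B p f] assms
    by (simp add: subset_expect_add subset_expect_cmult)
qed

lemma subset_expect_const:
  assumes "finite B"
  shows "subset_expect p B (\<lambda>S. c) = c"
  using assms by (induction B rule: finite_induct) (simp_all add: subset_expect_insert algebra_simps)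

lemma subset_expect_pow_card:
  assumes "finite B"
  shows "subset_expect p B (\<lambda>S. q ^ card S) = (p * q + (1 - p)) ^ card B"
  using assms
proof (induction B rule: finite_induct)
  case (insert x B)
  have "subset_expect p B (\<lambda>T. q ^ card (insert x T)) = q * subset_expect p B (\<lambda>T. q ^ card T)"
    unfolding subset_expect_cmult[symmetric]
  proof (rule subset_expect_cong)
    fix T assume "T \<subseteq> B"
    then show "q ^ card (insert x T) = q * q ^ card T"
      using insert.hyps finite_subset by (subst card_insert_disjoint) auto
  qed
  then show ?case
    using insert by (simp add: subset_expect_insert algebra_simps)
qed simp

lemma subset_expect_member:
  assumes "finite B" "x \<in> B"
  shows "subset_expect p B (\<lambda>S. if x \<in> S then g (S - {x}) else 0)
    = p * subset_expect p (B - {x}) g"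
proof -
  obtain C where B: "B = insert x C" "x \<notin> C" "finite C"
    using assms by (metis Set.set_insert finite_insert)
  have "subset_expect p C (\<lambda>T. if x \<in> insert x T then g (insert x T - {x}) else 0)
      = subset_expect p C g"
    by (rule subset_expect_cong) (use B(2) in \<open>auto intro: arg_cong[where f = g]\<close>)
  moreover have "subset_expect p C (\<lambda>T. if x \<in> T then g (T - {x}) else 0)
      = subset_expect p C (\<lambda>T. 0)"
    by (rule subset_expect_cong) (use B(2) in auto)
  ultimately show ?thesis
    unfolding B(1) using B(2,3) by (simp add: subset_expect_insert subset_expect_const)
qed

lemma subset_expect_restrict:
  assumes "finite E" "B \<subseteq> E"
  shows "subset_expect p E (\<lambda>G. g (G \<inter> B)) = subset_expect p B g"
proof -
  have fin: "finite B" "finite (E - B)" and E: "E = B \<union> (E - B)"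
    using assms finite_subset by auto
  have "subset_expect p E (\<lambda>G. g (G \<inter> B))
      = subset_expect p B (\<lambda>S. subset_expect p (E - B) (\<lambda>T. g ((S \<union> T) \<inter> B)))"
    by (subst E, rule subset_expect_Un) (use fin in auto)
  also have "\<dots> = subset_expect p B (\<lambda>S. subset_expect p (E - B) (\<lambda>T. g S))"
    by (intro subset_expect_cong arg_cong[where f = g]) auto
  finally show ?thesis
    using fin by (simp add: subset_expect_const)
qed

lemma subset_expect_prod_blocks:
  assumes "finite I" "finite E" "\<And>i. i \<in> I \<Longrightarrow> Bl i \<subseteq> E"
    "\<And>i j. i \<in> I \<Longrightarrow> j \<in> I \<Longrightarrow> i \<noteq> j \<Longrightarrow> Bl i \<inter> Bl j = {}"
  shows "subset_expect p E (\<lambda>G. \<Prod>i\<in>I. g i (G \<inter> Bl i)) = (\<Prod>i\<in>I. subset_expect p (Bl i) (g i))"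
  using assms
proof (induction I arbitrary: E rule: finite_induct)
  case empty
  then show ?case by (simp add: subset_expect_const)
next
  case (insert j I)
  let ?R = "E - Bl j"
  have "Bl j \<subseteq> E"
    using insert.prems(2) by simp
  then have fin: "finite (Bl j)" "finite ?R" and E: "E = Bl j \<union> ?R"
    using insert.prems(1) finite_subset by auto
  have "Bl i \<subseteq> ?R" if "i \<in> I" for i
    using insert.prems(2)[of i] insert.prems(3)[of i j] insert.hyps(2) that by auto
  then have IH: "subset_expect p ?R (\<lambda>T. \<Prod>i\<in>I. g i (T \<inter> Bl i))
      = (\<Prod>i\<in>I. subset_expect p (Bl i) (g i))"
    using fin(2) insert.prems(3) by (intro insert.IH) auto
  have "subset_expect p E (\<lambda>G. \<Prod>i\<in>insert j I. g i (G \<inter> Bl i))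
      = subset_expect p (Bl j) (\<lambda>S. subset_expect p ?R (\<lambda>T. g j S * (\<Prod>i\<in>I. g i (T \<inter> Bl i))))"
  proof (subst E, subst subset_expect_Un[OF fin], simp, intro subset_expect_cong)
    fix S T assume S: "S \<subseteq> Bl j" and T: "T \<subseteq> ?R"
    have "(S \<union> T) \<inter> Bl i = T \<inter> Bl i" if "i \<in> I" for i
      using S insert.prems(3)[of j i] insert.hyps(2) that by auto
    moreover have "(S \<union> T) \<inter> Bl j = S"
      using S T by auto
    ultimately show "(\<Prod>i\<in>insert j I. g i ((S \<union> T) \<inter> Bl i)) = g j S * (\<Prod>i\<in>I. g i (T \<inter> Bl i))"
      using insert.hyps by simp
  qed
  also have "\<dots> = subset_expect p (Bl j) (\<lambda>S. (\<Prod>i\<in>I. subset_expect p (Bl i) (g i)) * g j S)"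
    by (simp add: subset_expect_cmult IH mult.commute)
  also have "\<dots> = (\<Prod>i\<in>insert j I. subset_expect p (Bl i) (g i))"
    using insert.hyps by (simp add: subset_expect_cmult)
  finally show ?case .
qed

lemma subset_prob_le_1:
  assumes "finite B" "0 \<le> p" "p \<le> 1"
  shows "subset_prob p B P \<le> 1"
proof -
  have "subset_prob p B P \<le> subset_expect p B (\<lambda>S. 1)"
    unfolding subset_prob_def by (rule subset_expect_mono) (use assms in auto)
  then show ?thesis
    using assms by (simp add: subset_expect_const)
qed

lemma subset_prob_all_ge:
  assumes "finite B" "finite I" "0 \<le> p" "p \<le> 1"
  shows "1 - (\<Sum>i\<in>I. subset_prob p B (\<lambda>S. \<not> P i S)) \<le> subset_prob p B (\<lambda>S. \<forall>i\<in>I. P i S)"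
proof -
  have "1 - (\<Sum>i\<in>I. subset_prob p B (\<lambda>S. \<not> P i S))
      = subset_expect p B (\<lambda>S. 1 - (\<Sum>i\<in>I. if \<not> P i S then 1 else 0))"
    unfolding subset_prob_def
    by (simp add: subset_expect_diff subset_expect_sum subset_expect_const assms(1))
  also have "\<dots> \<le> subset_prob p B (\<lambda>S. \<forall>i\<in>I. P i S)"
    unfolding subset_prob_def
  proof (rule subset_expect_mono[OF assms(3,4)])
    fix S
    show "1 - (\<Sum>i\<in>I. if \<not> P i S then 1 else 0) \<le> (if \<forall>i\<in>I. P i S then 1 else (0::real))"
    proof (cases "\<forall>i\<in>I. P i S")
      case False
      then obtain i where "i \<in> I" "\<not> P i S" by blast
      then have "1 \<le> (\<Sum>i\<in>I. if \<not> P i S then 1 else (0::real))"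
        using member_le_sum[of i I "\<lambda>i. if \<not> P i S then 1 else (0::real)"] assms(2) by auto
      then show ?thesis using False by simp
    qed (simp add: sum_nonneg)
  qed
  finally show ?thesis .
qed

lemma subset_expect_exp_neg_card:
  assumes "finite E" "A \<subseteq> E" "0 \<le> p" "p \<le> 1"
  shows "subset_expect p E (\<lambda>G. exp (- real (card (G \<inter> A)))) \<le> exp (- p * real (card A) / 2)"
proof -
  have fin: "finite A"
    using assms finite_subset by blast
  have base: "p * exp (-1) + (1 - p) \<le> exp (- p / 2)"
  proof -
    have "exp (-1::real) \<le> 1 / 2"
      using exp_ge_add_one_self[of "1::real"] by (simp add: exp_minus field_simps)
    then have "p * exp (-1) + (1 - p) \<le> 1 + - p / 2"
      using mult_left_mono[of "exp (-1)" "1/2" p] assms(3) by simp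
    also have "\<dots> \<le> exp (- p / 2)"
      by (rule exp_ge_add_one_self)
    finally show ?thesis .
  qed
  have "subset_expect p E (\<lambda>G. exp (- real (card (G \<inter> A))))
      = subset_expect p E (\<lambda>G. exp (-1) ^ card (G \<inter> A))"
    by (simp add: exp_of_nat_mult[symmetric])
  also have "\<dots> = (p * exp (-1) + (1 - p)) ^ card A"
    using subset_expect_restrict[OF assms(1,2), of p "\<lambda>S. exp (-1) ^ card S"]
    by (simp add: subset_expect_pow_card[OF fin])
  also have "\<dots> \<le> exp (- p / 2) ^ card A"
    by (rule power_mono[OF base]) (use assms in simp)
  also have "\<dots> = exp (- p * real (card A) / 2)"
    by (simp add: exp_of_nat_mult[symmetric])
  finally show ?thesis .
qed

definition clash_count :: "'a set \<Rightarrow> 'a set \<Rightarrow> nat" where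
  "clash_count Ac S = (if 2 \<le> card S then card (S \<inter> Ac) else 0)"

text \<open>Each summand involves a single star edge x, so its expectation is computed exactly by
  \<open>subset_expect_member\<close>.\<close>
lemma exp_clash_count_le:
  assumes "finite S" "finite Ac"
  shows "exp 1 ^ clash_count Ac S
    \<le> 1 + 4 * (\<Sum>x\<in>Ac. if x \<in> S then exp 1 ^ card (S - {x}) - 1 else (0::real))"
proof -
  have e: "1 \<le> exp (1::real)" "exp (1::real) \<le> 3"
    by (simp_all add: exp_le)
  have terms_nonneg: "0 \<le> (if x \<in> S then exp 1 ^ card (S - {x}) - 1 else (0::real))" for x
    using e by (simp add: one_le_power)
  show ?thesis
  proof (cases "2 \<le> card S \<and> S \<inter> Ac \<noteq> {}")
    case False
    then have "clash_count Ac S = 0"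
      unfolding clash_count_def by auto
    then show ?thesis
      using terms_nonneg by (simp add: sum_nonneg)
  next
    case True
    then obtain x where x: "x \<in> S" "x \<in> Ac" by auto
    define u where "u = exp (1::real) ^ card (S - {x})"
    have card_S: "card S = Suc (card (S - {x}))"
      using card_Suc_Diff1[OF assms(1) x(1)] by simp
    have "1 \<le> card (S - {x})"
      using True x assms(1) by auto
    then have u: "exp 1 \<le> u"
      unfolding u_def using power_increasing[OF _ e(1)] by (metis power_one_right)
    have "exp 1 ^ clash_count Ac S \<le> exp (1::real) ^ card S"
      using True assms by (intro power_increasing e(1)) (auto simp: clash_count_def intro: card_mono)
    also have "\<dots> = exp 1 * u"
      unfolding u_def card_S by simp
    also have "\<dots> \<le> 1 + 4 * (u - 1)"
    proof -
      \<comment> \<open>e u \<le> 1 + 4 (u - 1) holds for u = e since (e - 1) (3 - e) \<ge> 0, and its slope in u is 4 - e > 0\<close>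
      have "(4 - exp 1) * exp 1 \<le> (4 - exp 1) * u"
        using u e by (intro mult_left_mono) auto
      moreover have "0 \<le> (exp 1 - 1) * (3 - exp (1::real))"
        using e by simp
      ultimately show ?thesis
        by (simp add: algebra_simps)
    qed
    also have "\<dots> \<le> 1 + 4 * (\<Sum>x\<in>Ac. if x \<in> S then exp 1 ^ card (S - {x}) - 1 else (0::real))"
    proof -
      have "(if x \<in> S then exp 1 ^ card (S - {x}) - 1 else 0)
          \<le> (\<Sum>x\<in>Ac. if x \<in> S then exp 1 ^ card (S - {x}) - 1 else (0::real))"
        by (rule member_le_sum[OF x(2)]) (use terms_nonneg assms(2) in auto)
      then show ?thesis
        using x(1) by (simp add: u_def)
    qed
    finally show ?thesis .
  qed
qed

lemma bernoulli_exp_pow_le: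
  assumes "m \<le> k" "0 \<le> p" "p * real k \<le> 1 / 1000"
  shows "(p * exp 1 + (1 - p)) ^ m \<le> 1 + 1 / 250"
proof -
  have "p * exp 1 + (1 - p) \<le> 1 + 2 * p"
    using mult_left_mono[OF exp_le assms(2)] by linarith
  also have "\<dots> \<le> exp (2 * p)"
    by (rule exp_ge_add_one_self)
  finally have "(p * exp 1 + (1 - p)) ^ m \<le> exp (2 * p) ^ m"
    using mult_nonneg_nonneg[OF assms(2), of "exp 1 - 1"] by (intro power_mono) (simp_all add: algebra_simps)
  also have "\<dots> = exp (2 * (p * real m))"
    by (simp add: exp_of_nat_mult[symmetric] mult_ac)
  also have "\<dots> \<le> exp (1 / 500)"
    using mult_left_mono[of "real m" "real k" p] assms by simp
  also have "\<dots> \<le> 1 + 1 / 250"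
    using exp_bound_lemma[of "1 / 500 :: real"] by simp
  finally show ?thesis .
qed

lemma subset_expect_exp_clash_count:
  assumes "finite C" "Ac \<subseteq> C" "card C \<le> k" "0 \<le> p" "p \<le> 1" "p * real k \<le> 1 / 1000"
  shows "subset_expect p C (\<lambda>S. exp 1 ^ clash_count Ac S) \<le> exp (p * real (card Ac) / 60)"
proof -
  have fin: "finite Ac"
    using assms finite_subset by blast
  have summand: "subset_expect p C (\<lambda>S. if x \<in> S then exp 1 ^ card (S - {x}) - 1 else 0) \<le> p / 250"
    if "x \<in> Ac" for x
  proof -
    have x: "x \<in> C"
      using that assms(2) by blast
    have "subset_expect p C (\<lambda>S. if x \<in> S then exp 1 ^ card (S - {x}) - 1 else 0)
        = p * ((p * exp 1 + (1 - p)) ^ card (C - {x}) - 1)"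
      using subset_expect_member[OF assms(1) x, of p "\<lambda>T. exp 1 ^ card T - 1"] assms(1)
      by (simp add: subset_expect_diff subset_expect_pow_card subset_expect_const)
    also have "\<dots> \<le> p * (1 / 250)"
      using bernoulli_exp_pow_le[of "card (C - {x})" k p] assms
      by (intro mult_left_mono) (auto intro: le_trans[OF card_Diff1_le])
    finally show ?thesis by simp
  qed
  have "subset_expect p C (\<lambda>S. exp 1 ^ clash_count Ac S)
      \<le> subset_expect p C (\<lambda>S. 1 + 4 * (\<Sum>x\<in>Ac. if x \<in> S then exp 1 ^ card (S - {x}) - 1 else 0))"
    using assms finite_subset exp_clash_count_le[OF _ fin] by (intro subset_expect_mono) auto
  also have "\<dots> = 1 + 4 * (\<Sum>x\<in>Ac. subset_expect p C
      (\<lambda>S. if x \<in> S then exp 1 ^ card (S - {x}) - 1 else 0))"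
    using assms(1) by (simp add: subset_expect_add subset_expect_cmult subset_expect_sum
        subset_expect_const)
  also have "\<dots> \<le> 1 + 4 * (\<Sum>x\<in>Ac. p / 250)"
  proof -
    have "(\<Sum>x\<in>Ac. subset_expect p C (\<lambda>S. if x \<in> S then exp 1 ^ card (S - {x}) - 1 else 0))
        \<le> (\<Sum>x\<in>Ac. p / 250)"
      by (rule sum_mono) (rule summand)
    then show ?thesis by (simp add: mult.commute)
  qed
  also have "\<dots> \<le> 1 + p * real (card Ac) / 60"
    using assms(4) by simp
  also have "\<dots> \<le> exp (p * real (card Ac) / 60)"
    by (rule exp_ge_add_one_self)
  finally show ?thesis .
qed

text \<open>For G \<subseteq> E, the number of edges of G \<inter> A whose colour appears on another edge of G.\<close>
definition clashes :: "('e \<Rightarrow> 'c) \<Rightarrow> 'e set \<Rightarrow> 'e set \<Rightarrow> 'e set \<Rightarrow> nat" where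
  "clashes \<phi> E A G = (\<Sum>c\<in>\<phi> ` A. clash_count {e \<in> A. \<phi> e = c} (G \<inter> {e \<in> E. \<phi> e = c}))"

lemma subset_expect_exp_clashes:
  assumes "finite E" "A \<subseteq> E" "\<And>c. card {e \<in> E. \<phi> e = c} \<le> k"
    "0 \<le> p" "p \<le> 1" "p * real k \<le> 1 / 1000"
  shows "subset_expect p E (\<lambda>G. exp 1 ^ clashes \<phi> E A G) \<le> exp (p * real (card A) / 60)"
proof -
  define C where "C c = {e \<in> E. \<phi> e = c}" for c
  define Ac where "Ac c = {e \<in> A. \<phi> e = c}" for c
  have fin: "finite (\<phi> ` A)" "finite A" "\<And>c. finite (C c)"
    using assms(1,2) finite_subset unfolding C_def by auto
  have "subset_expect p E (\<lambda>G. exp 1 ^ clashes \<phi> E A G)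
      = subset_expect p E (\<lambda>G. \<Prod>c\<in>\<phi> ` A. exp 1 ^ clash_count (Ac c) (G \<inter> C c))"
    unfolding clashes_def C_def Ac_def by (simp add: power_sum)
  also have "\<dots> = (\<Prod>c\<in>\<phi> ` A. subset_expect p (C c) (\<lambda>S. exp 1 ^ clash_count (Ac c) S))"
    by (rule subset_expect_prod_blocks) (auto simp: fin assms(1) C_def)
  also have "\<dots> \<le> (\<Prod>c\<in>\<phi> ` A. exp (p * real (card (Ac c)) / 60))"
  proof (rule prod_mono)
    fix c
    have "Ac c \<subseteq> C c"
      using assms(2) unfolding Ac_def C_def by auto
    note bound = subset_expect_exp_clash_count[OF fin(3) this assms(3)[of c, folded C_def] assms(4-6)]
    have "0 \<le> subset_expect p (C c) (\<lambda>S. 0)"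
      using fin by (simp add: subset_expect_const)
    also have "\<dots> \<le> subset_expect p (C c) (\<lambda>S. exp 1 ^ clash_count (Ac c) S)"
      by (rule subset_expect_mono) (use assms in auto)
    finally show "0 \<le> subset_expect p (C c) (\<lambda>S. exp 1 ^ clash_count (Ac c) S) \<and>
        subset_expect p (C c) (\<lambda>S. exp 1 ^ clash_count (Ac c) S) \<le> exp (p * real (card (Ac c)) / 60)"
      using bound by simp
  qed
  also have "\<dots> = exp (p * (\<Sum>c\<in>\<phi> ` A. real (card (Ac c))) / 60)"
    using fin by (simp add: exp_sum[symmetric] sum_distrib_left sum_divide_distrib)
  also have "(\<Sum>c\<in>\<phi> ` A. real (card (Ac c))) = real (card A)"
  proof -
    have "A = (\<Union>c\<in>\<phi> ` A. Ac c)"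
      unfolding Ac_def by auto
    moreover have "card (\<Union>c\<in>\<phi> ` A. Ac c) = (\<Sum>c\<in>\<phi> ` A. card (Ac c))"
      using fin by (intro card_UN_disjoint) (auto simp: Ac_def)
    ultimately have "card A = (\<Sum>c\<in>\<phi> ` A. card (Ac c))"
      by simp
    then show ?thesis by simp
  qed
  finally show ?thesis .
qed

lemma card_le_rainbow_part_plus_clashes:
  assumes "G \<subseteq> E" "finite E" "A \<subseteq> E"
  shows "card (G \<inter> A) \<le> card (rainbow_part \<phi> G \<inter> A) + clashes \<phi> E A G"
proof -
  define W where "W c = (if 2 \<le> card (G \<inter> {e \<in> E. \<phi> e = c}) then G \<inter> {e \<in> A. \<phi> e = c} else {})" for c
  have fin: "finite G" "finite A"
    using assms finite_subset by auto
  have "G \<inter> A \<subseteq> (rainbow_part \<phi> G \<inter> A) \<union> (\<Union>c\<in>\<phi> ` A. W c)"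
  proof
    fix e assume e: "e \<in> G \<inter> A"
    show "e \<in> (rainbow_part \<phi> G \<inter> A) \<union> (\<Union>c\<in>\<phi> ` A. W c)"
    proof (cases "e \<in> rainbow_part \<phi> G")
      case False
      then obtain e' where e': "e' \<in> G" "\<phi> e' = \<phi> e" "e' \<noteq> e"
        using e unfolding rainbow_part_def by auto
      have "{e, e'} \<subseteq> G \<inter> {x \<in> E. \<phi> x = \<phi> e}"
        using e e' assms(1) by auto
      then have "card {e, e'} \<le> card (G \<inter> {x \<in> E. \<phi> x = \<phi> e})"
        using fin by (intro card_mono) auto
      then have "e \<in> W (\<phi> e)"
        unfolding W_def using e e' by auto
      then show ?thesis
        using e by blast
    qed (use e in simp)
  qed
  then have "card (G \<inter> A) \<le> card ((rainbow_part \<phi> G \<inter> A) \<union> (\<Union>c\<in>\<phi> ` A. W c))"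
    using fin by (intro card_mono) (auto simp: W_def rainbow_part_def)
  also have "\<dots> \<le> card (rainbow_part \<phi> G \<inter> A) + card (\<Union>c\<in>\<phi> ` A. W c)"
    by (rule card_Un_le)
  also have "card (\<Union>c\<in>\<phi> ` A. W c) \<le> (\<Sum>c\<in>\<phi> ` A. card (W c))"
    by (rule card_UN_le) (simp add: fin)
  also have "\<dots> = clashes \<phi> E A G"
  proof -
    have "G \<inter> {e \<in> E. \<phi> e = c} \<inter> {e \<in> A. \<phi> e = c} = G \<inter> {e \<in> A. \<phi> e = c}" for c
      using assms(3) by auto
    then show ?thesis
      unfolding clashes_def clash_count_def W_def by (intro sum.cong) simp_all
  qed
  finally show ?thesis by simp
qed

text \<open>A vertex losing a third of its degree has either few edges or at least D/3 clashes.\<close>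
lemma one_le_exp_tails:
  fixes x r z :: nat and D :: real
  assumes "x \<le> r + z" "3 * r < 2 * x"
  shows "1 \<le> exp (D - real x) + exp (real z - D / 3)"
proof (cases "real x \<le> D \<or> D \<le> 3 * real z")
  case True
  then have "1 \<le> exp (D - real x) \<or> 1 \<le> exp (real z - D / 3)"
    by auto
  then show ?thesis
    using exp_gt_zero[of "D - real x"] exp_gt_zero[of "real z - D / 3"] by linarith
next
  case False
  then show ?thesis
    using assms by linarith
qed

lemma subset_prob_rainbow_loss:
  fixes \<phi> :: "nat set \<Rightarrow> 'c"
  assumes "finite E" "A \<subseteq> E" "\<And>c. card {e \<in> E. \<phi> e = c} \<le> k"
    "0 \<le> p" "p \<le> 1" "p * real k \<le> 1 / 1000"
  shows "subset_prob p E (\<lambda>G. 3 * card (rainbow_part \<phi> G \<inter> A) < 2 * card (G \<inter> A))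
    \<le> 2 * exp (- p * real (card A) / 16)"
proof -
  define D where "D = p * real (card A) / 4"
  have "subset_prob p E (\<lambda>G. 3 * card (rainbow_part \<phi> G \<inter> A) < 2 * card (G \<inter> A))
      \<le> subset_expect p E (\<lambda>G. exp D * exp (- real (card (G \<inter> A)))
          + exp (- (D / 3)) * exp 1 ^ clashes \<phi> E A G)"
    unfolding subset_prob_def
  proof (rule subset_expect_mono[OF assms(4,5)])
    fix G assume "G \<subseteq> E"
    then have "1 \<le> exp (D - real (card (G \<inter> A))) + exp (real (clashes \<phi> E A G) - D / 3)"
      if "3 * card (rainbow_part \<phi> G \<inter> A) < 2 * card (G \<inter> A)"
      using one_le_exp_tails[OF card_le_rainbow_part_plus_clashes that] assms(1,2) by blast
    then show "(if 3 * card (rainbow_part \<phi> G \<inter> A) < 2 * card (G \<inter> A) then 1 else 0)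
        \<le> exp D * exp (- real (card (G \<inter> A))) + exp (- (D / 3)) * exp 1 ^ clashes \<phi> E A G"
      by (simp add: exp_add[symmetric] exp_of_nat_mult[symmetric] add_nonneg_nonneg)
  qed
  also have "\<dots> \<le> exp D * exp (- p * real (card A) / 2) + exp (- (D / 3)) * exp (p * real (card A) / 60)"
    unfolding subset_expect_add subset_expect_cmult
    using subset_expect_exp_neg_card[OF assms(1,2,4,5)] subset_expect_exp_clashes[OF assms]
    by (intro add_mono mult_left_mono) auto
  also have "\<dots> = exp (- (p * real (card A) / 4)) + exp (- (p * real (card A) / 15))"
    unfolding D_def by (simp add: exp_add[symmetric] field_simps)
  also have "\<dots> \<le> 2 * exp (- p * real (card A) / 16)"
  proof -
    have "0 \<le> p * real (card A)"
      using assms(4) by simp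
    then have "exp (- (p * real (card A) / 4)) \<le> exp (- p * real (card A) / 16)"
      "exp (- (p * real (card A) / 15)) \<le> exp (- p * real (card A) / 16)"
      by simp_all
    then show ?thesis by linarith
  qed
  finally show ?thesis .
qed

lemma finite_Kn_edges: "finite (Kn_edges n)"
proof (rule finite_subset)
  show "Kn_edges n \<subseteq> Pow {..<n}"
    unfolding Kn_edges_def by auto
qed simp

lemma card_Kn_star:
  assumes "v < n"
  shows "card {e \<in> Kn_edges n. v \<in> e} = n - 1"
proof -
  have "{e \<in> Kn_edges n. v \<in> e} = (\<lambda>u. {u, v}) ` ({..<n} - {v})"
    unfolding Kn_edges_def using assms by (auto simp: insert_commute)
  moreover have "inj_on (\<lambda>u. {u, v}) ({..<n} - {v})"
    by (auto simp: inj_on_def doubleton_eq_iff)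
  ultimately show ?thesis
    using assms by (simp add: card_image)
qed

lemma degree_eq_card_Kn_star:
  "\<Gamma> \<subseteq> Kn_edges n \<Longrightarrow> degree \<Gamma> v = card (\<Gamma> \<inter> {e \<in> Kn_edges n. v \<in> e})"
  unfolding degree_def by (rule arg_cong[where f = card]) blast

lemma Gnp_prob_eq_subset_prob: "Gnp_prob n p P = subset_prob p (Kn_edges n) P"
proof -
  have "{\<Gamma>. \<Gamma> \<subseteq> Kn_edges n \<and> P \<Gamma>} = {\<Gamma> \<in> Pow (Kn_edges n). P \<Gamma>}"
    by auto
  then show ?thesis
    unfolding Gnp_prob_def subset_prob_def subset_expect_def subset_weight_def
    using sum.inter_filter[of "Pow (Kn_edges n)"
        "\<lambda>\<Gamma>. p ^ card \<Gamma> * (1 - p) ^ (card (Kn_edges n) - card \<Gamma>)" P] finite_Kn_edges[of n]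
    by (simp add: if_distrib cong: if_cong)
qed

lemma Gnp_prob_rainbow_degrees:
  fixes \<phi> :: "nat set \<Rightarrow> 'c"
  assumes "k_bounded n k \<phi>" "0 \<le> p" "p \<le> 1" "p * real k \<le> 1 / 1000"
  shows "1 - 2 * real n * exp (- p * real (n - 1) / 16)
    \<le> Gnp_prob n p (\<lambda>\<Gamma>. \<forall>v < n. 3 * degree (rainbow_part \<phi> \<Gamma>) v \<ge> 2 * degree \<Gamma> v)"
proof -
  let ?E = "Kn_edges n"
  let ?A = "\<lambda>v. {e \<in> ?E. v \<in> e}"
  let ?good = "\<lambda>v \<Gamma>. 3 * degree (rainbow_part \<phi> \<Gamma>) v \<ge> 2 * degree \<Gamma> v"
  have bad: "subset_prob p ?E (\<lambda>\<Gamma>. \<not> ?good v \<Gamma>) \<le> 2 * exp (- p * real (n - 1) / 16)"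
    if "v < n" for v
  proof -
    have "subset_prob p ?E (\<lambda>\<Gamma>. \<not> ?good v \<Gamma>)
        = subset_prob p ?E (\<lambda>\<Gamma>. 3 * card (rainbow_part \<phi> \<Gamma> \<inter> ?A v) < 2 * card (\<Gamma> \<inter> ?A v))"
    proof (rule subset_prob_cong)
      fix \<Gamma> assume \<Gamma>: "\<Gamma> \<subseteq> ?E"
      moreover have "rainbow_part \<phi> \<Gamma> \<subseteq> ?E"
        using \<Gamma> unfolding rainbow_part_def by blast
      ultimately show "(\<not> ?good v \<Gamma>)
          = (3 * card (rainbow_part \<phi> \<Gamma> \<inter> ?A v) < 2 * card (\<Gamma> \<inter> ?A v))"
        by (simp add: degree_eq_card_Kn_star not_le)
    qed
    also have "\<dots> \<le> 2 * exp (- p * real (card (?A v)) / 16)"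
      using assms unfolding k_bounded_def
      by (intro subset_prob_rainbow_loss[OF finite_Kn_edges]) auto
    finally show ?thesis
      using card_Kn_star[OF that] by simp
  qed
  have "1 - 2 * real n * exp (- p * real (n - 1) / 16)
      \<le> 1 - (\<Sum>v\<in>{..<n}. subset_prob p ?E (\<lambda>\<Gamma>. \<not> ?good v \<Gamma>))"
  proof -
    have "(\<Sum>v\<in>{..<n}. subset_prob p ?E (\<lambda>\<Gamma>. \<not> ?good v \<Gamma>))
        \<le> (\<Sum>v\<in>{..<n}. 2 * exp (- p * real (n - 1) / 16))"
      by (rule sum_mono) (rule bad, simp)
    then show ?thesis
      unfolding sum_constant card_lessThan by linarith
  qed
  also have "\<dots> \<le> subset_prob p ?E (\<lambda>\<Gamma>. \<forall>v\<in>{..<n}. ?good v \<Gamma>)"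
    using assms by (intro subset_prob_all_ge finite_Kn_edges) auto
  finally show ?thesis
    by (simp add: Gnp_prob_eq_subset_prob lessThan_def)
qed

lemma n_exp_le_inverse:
  assumes "2 \<le> n" "10^6 * ln (real n) / real n \<le> x"
  shows "2 * real n * exp (- x * real (n - 1) / 16) \<le> 2 / real n"
proof -
  have n: "0 < real n" "0 \<le> ln (real n)"
    using assms(1) by simp_all
  then have "0 \<le> 10^6 * ln (real n) / real n"
    by simp
  then have "0 \<le> x"
    using assms(2) by linarith
  have "1000000 * ln (real n) \<le> x * real n"
    using assms(2) n by (simp add: field_simps)
  moreover have "x * real n / 2 \<le> x * real (n - 1)"
    using mult_left_mono[of "real n / 2" "real (n - 1)" x] assms(1) \<open>0 \<le> x\<close>
    by (simp add: of_nat_diff)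
  ultimately have "2 * ln (real n) \<le> x * real (n - 1) / 16"
    using n by linarith
  then have "exp (- x * real (n - 1) / 16) \<le> exp (- (2 * ln (real n)))"
    by simp
  also have "\<dots> = 1 / real n ^ 2"
    using n by (simp add: exp_minus exp_of_nat_mult[of 2, simplified] inverse_eq_divide)
  finally have "real n * exp (- x * real (n - 1) / 16) \<le> real n * (1 / real n ^ 2)"
    using n by (intro mult_left_mono) auto
  then show ?thesis
    using n by (simp add: power2_eq_square)
qed

theorem lemma3p2:
  fixes p :: "nat \<Rightarrow> real" and k :: "nat \<Rightarrow> nat" and \<phi> :: "nat \<Rightarrow> nat set \<Rightarrow> 'c"
  assumes "eventually (\<lambda>n. 0 \<le> p n \<and> p n \<le> 1) sequentially"
    and "eventually (\<lambda>n. p n \<ge> 10^6 * ln (real n) / real n) sequentially"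
    and "eventually (\<lambda>n. p n * real (k n) \<le> 10 powr (-3)) sequentially"
    and "eventually (\<lambda>n. k_bounded n (k n) (\<phi> n)) sequentially"
  shows "(\<lambda>n. Gnp_prob n (p n)
            (\<lambda>\<Gamma>. \<forall>v < n. 3 * degree (rainbow_part (\<phi> n) \<Gamma>) v \<ge> 2 * degree \<Gamma> v))
         \<longlonglongrightarrow> 1"
proof -
  let ?f = "\<lambda>n. Gnp_prob n (p n)
            (\<lambda>\<Gamma>. \<forall>v < n. 3 * degree (rainbow_part (\<phi> n) \<Gamma>) v \<ge> 2 * degree \<Gamma> v)"
  have powr: "(10::real) powr (-3) = 1 / 1000"
    by (simp add: powr_minus powr_realpow)
  have bounds: "eventually (\<lambda>n. 1 - 2 / real n \<le> ?f n \<and> ?f n \<le> 1) sequentially"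
    using assms eventually_ge_at_top[of "2::nat"]
  proof eventually_elim
    case (elim n)
    then have "1 - 2 / real n \<le> ?f n"
      unfolding powr
      using Gnp_prob_rainbow_degrees[of n "k n" "\<phi> n" "p n"] n_exp_le_inverse[of n "p n"] by simp
    moreover have "?f n \<le> 1"
      using elim by (simp add: Gnp_prob_eq_subset_prob subset_prob_le_1 finite_Kn_edges)
    ultimately show ?case ..
  qed
  have lower: "(\<lambda>n. 1 - 2 / real n) \<longlonglongrightarrow> 1"
    using tendsto_diff[OF tendsto_const lim_const_over_n[of "2::real"]] by simp
  show ?thesis
    by (rule tendsto_sandwich[OF _ _ lower tendsto_const]) (use bounds in \<open>auto elim: eventually_mono\<close>)
qed

end
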